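(* There is a deterministic distributed dynamic data structure for robust $2$-hop neighborhood listing which handles edge insertions and deletions in $O(1)$ amortized rounds.
   Context: Highly dynamic network model: a synchronous network on a fixed set $V$ of $n$ nodes with unique identifiers starts as the empty graph; at the beginning of round $i$ the graph is $G_i=(V,E_i)$, obtained from the previous graph by an adversary inserting and/or deleting an arbitrary (unbounded) set of edges. At the start of each round every node is notified only of the insertions/deletions of edges incident to it; then each node may send a message of $O(\log n)$ bits to each of its current neighbors. A distributed dynamic data structure consists of a local part $DS_v$ at each node $v$; at the end of every round, $DS_v$ may be queried and must answer immediately, without any further communication, either correctly or with $\texttt{inconsistent}$. The amortized round complexity is at most $c$ if for every round $i$, the number of rounds up to round $i$ in which at least one node $v$ has $DS_v$ in an inconsistent state, divided by the total number of topology changes that occurred up to round $i$, is at most $c$. For an edge $e$, its insertion time $t_e$ is the latest round in which $e$ was inserted (initially $-1$). An edge $e=\{u,w\}$ of $G_i$ is $(v,i)$-robust if $v\in e$, or $\{v,u\}\in E_i$ and $t_e\geq t_{\{v,u\}}$, or $\{v,w\}\in E_i$ and $t_e\geq t_{\{v,w\}}$. Robust $2$-hop neighborhood listing: at the end of round $i$, $DS_v$ must respond to a query $\{u,w\}$ with $\texttt{true}$ if the edge is $(v,i)$-robust, $\texttt{false}$ if it is not, or $\texttt{inconsistent}$. *)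

theory Defs
  imports Complex_Main
begin

text \<open>
  Nodes are natural numbers (their unique identifiers).
  An adversary is a sequence of edge sets E :: nat \<Rightarrow> nat set set, where E 0 = {} is the
  initial (empty) graph and E (Suc i) is the graph G_(i+1) at the beginning of round i+1.
  Edges are 2-element subsets of V.
\<close>

type_synonym msg = "bool list"

text \<open>What a node learns in one round: neighbours of newly inserted incident edges,
  neighbours of deleted incident edges, and the messages received (None = no message).\<close>
type_synonym rnd = "nat set \<times> nat set \<times> (nat \<Rightarrow> msg option)"

type_synonym hist = "rnd list"

text \<open>Deterministic sending function: n, own identifier, history of completed rounds,
  current-round inserted/deleted incident neighbours, target neighbour \<Rightarrow> message.\<close>
type_synonym send_fn = "nat \<Rightarrow> nat \<Rightarrow> hist \<Rightarrow> nat set \<Rightarrow> nat set \<Rightarrow> nat \<Rightarrow> msg option"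

text \<open>Deterministic local query answering (no communication): n, own identifier, full
  local history up to the end of the current round, query pair (u,w) \<Rightarrow>
  Some True / Some False, or None meaning inconsistent.\<close>
type_synonym query_fn = "nat \<Rightarrow> nat \<Rightarrow> hist \<Rightarrow> nat \<Rightarrow> nat \<Rightarrow> bool option"

definition valid_adv :: "nat set \<Rightarrow> (nat \<Rightarrow> nat set set) \<Rightarrow> bool" where
  "valid_adv V E \<longleftrightarrow> E 0 = {} \<and> (\<forall>i. \<forall>e\<in>E i. e \<subseteq> V \<and> card e = 2)"

text \<open>Notifications of node v at the beginning of round Suc i.\<close>
definition ins_nb :: "(nat \<Rightarrow> nat set set) \<Rightarrow> nat \<Rightarrow> nat \<Rightarrow> nat set" where
  "ins_nb E i v = {u. {v,u} \<in> E (Suc i) \<and> {v,u} \<notin> E i}"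

definition del_nb :: "(nat \<Rightarrow> nat set set) \<Rightarrow> nat \<Rightarrow> nat \<Rightarrow> nat set" where
  "del_nb E i v = {u. {v,u} \<in> E i \<and> {v,u} \<notin> E (Suc i)}"

text \<open>H sf n E i v: the local history of node v at the end of round i.\<close>
primrec H :: "send_fn \<Rightarrow> nat \<Rightarrow> (nat \<Rightarrow> nat set set) \<Rightarrow> nat \<Rightarrow> nat \<Rightarrow> hist" where
  "H sf n E 0 = (\<lambda>v. [])"
| "H sf n E (Suc i) = (\<lambda>v. H sf n E i v @
     [(ins_nb E i v, del_nb E i v,
       \<lambda>u. if {u,v} \<in> E (Suc i)
           then sf n u (H sf n E i u) (ins_nb E i u) (del_nb E i u) v
           else None)])"

text \<open>Messages of O(log n) bits: at most K * (ceil(log2 n) + 1) bits.\<close>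
definition msg_bounded :: "send_fn \<Rightarrow> nat \<Rightarrow> nat \<Rightarrow> nat set \<Rightarrow> (nat \<Rightarrow> nat set set) \<Rightarrow> bool" where
  "msg_bounded sf K n V E \<longleftrightarrow>
     (\<forall>i v u m. v \<in> V \<and> {v,u} \<in> E (Suc i) \<and>
        sf n v (H sf n E i v) (ins_nb E i v) (del_nb E i v) u = Some m
        \<longrightarrow> real (length m) \<le> real K * (of_int \<lceil>log 2 (real n)\<rceil> + 1))"

definition changes :: "(nat \<Rightarrow> nat set set) \<Rightarrow> nat \<Rightarrow> nat" where
  "changes E i = card (E (Suc i) - E i) + card (E i - E (Suc i))"

definition ins_time :: "(nat \<Rightarrow> nat set set) \<Rightarrow> nat \<Rightarrow> nat set \<Rightarrow> int" where
  "ins_time E i e =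
     (if \<exists>j<i. e \<in> E (Suc j) \<and> e \<notin> E j
      then int (Suc (GREATEST j. j < i \<and> e \<in> E (Suc j) \<and> e \<notin> E j))
      else -1)"

definition robust :: "(nat \<Rightarrow> nat set set) \<Rightarrow> nat \<Rightarrow> nat \<Rightarrow> nat \<Rightarrow> nat \<Rightarrow> bool" where
  "robust E i v u w \<longleftrightarrow> {u,w} \<in> E i \<and>
     (v = u \<or> v = w
      \<or> ({v,u} \<in> E i \<and> ins_time E i {u,w} \<ge> ins_time E i {v,u})
      \<or> ({v,w} \<in> E i \<and> ins_time E i {u,w} \<ge> ins_time E i {v,w}))"

definition answers_correct :: "send_fn \<Rightarrow> query_fn \<Rightarrow> nat \<Rightarrow> nat set \<Rightarrow> (nat \<Rightarrow> nat set set) \<Rightarrow> bool" where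
  "answers_correct sf qry n V E \<longleftrightarrow>
     (\<forall>i v u w. 1 \<le> i \<and> v \<in> V \<and> u \<in> V \<and> w \<in> V \<and> u \<noteq> w \<longrightarrow>
        qry n v (H sf n E i v) u w \<in> {None, Some (robust E i v u w)})"

definition bad_round :: "send_fn \<Rightarrow> query_fn \<Rightarrow> nat \<Rightarrow> nat set \<Rightarrow> (nat \<Rightarrow> nat set set) \<Rightarrow> nat \<Rightarrow> bool" where
  "bad_round sf qry n V E j \<longleftrightarrow>
     (\<exists>v\<in>V. \<exists>u\<in>V. \<exists>w\<in>V. u \<noteq> w \<and> qry n v (H sf n E (Suc j) v) u w = None)"

definition amortized_bound :: "send_fn \<Rightarrow> query_fn \<Rightarrow> real \<Rightarrow> nat \<Rightarrow> nat set \<Rightarrow> (nat \<Rightarrow> nat set set) \<Rightarrow> bool" where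
  "amortized_bound sf qry c n V E \<longleftrightarrow>
     (\<forall>i. real (card {j. j < i \<and> bad_round sf qry n V E j}) \<le> c * real (\<Sum>j<i. changes E j))"

end

theory Submission
 imports Defs
begin

text \<open>Every node \<open>u\<close> keeps a log of the changes of its incident edges, in the order it is
  notified of them, and a cursor into this log for each neighbour \<open>v\<close>: every round it sends \<open>v\<close>
  the entry under the cursor, with an identifier in \<open>O(log n)\<close> bits, and advances the cursor. A
  newly inserted neighbour starts at the entries of the current round, so once \<open>v\<close> has caught up,
  replaying the entries it received yields exactly the neighbours \<open>w\<close> of \<open>u\<close> with
  \<open>t\<^sub>u\<^sub>w \<ge> t\<^sub>v\<^sub>u\<close>. A node answers inconsistently only while it lags behind some neighbour.
  All cursors into the log of \<open>u\<close> lag behind by at most a common potential, which grows by the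
  number of entries appended to the log and otherwise drops by one per round. Hence the rounds in
  which some node lags are at most as many as the entries of all logs, i.e. twice the number of
  topology changes.\<close>

fun bits_of :: "nat \<Rightarrow> bool list" where
  "bits_of k = (if k = 0 then [] else odd k # bits_of (k div 2))"

declare bits_of.simps [simp del]

primrec nat_of_bits :: "bool list \<Rightarrow> nat" where
  "nat_of_bits [] = 0"
| "nat_of_bits (b # bs) = of_bool b + 2 * nat_of_bits bs"

lemma nat_of_bits_of [simp]: "nat_of_bits (bits_of k) = k"
  by (induction k rule: bits_of.induct) (subst bits_of.simps, auto)

lemma length_bits_of_le: "k < 2 ^ l \<Longrightarrow> length (bits_of k) \<le> l"
proof (induction l arbitrary: k)
  case 0
  then show ?case by (simp add: bits_of.simps)
next
  case (Suc l)
  then have "length (bits_of (k div 2)) \<le> l" by simp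
  then show ?case by (simp add: bits_of.simps[of k])
qed

type_synonym event = "bool \<times> nat"

definition round_events :: "nat set \<Rightarrow> nat set \<Rightarrow> event list" where
  "round_events a b = map (Pair True) (sorted_list_of_set a) @ map (Pair False) (sorted_list_of_set b)"

fun apply_event :: "event \<Rightarrow> nat set \<Rightarrow> nat set" where
  "apply_event (True, w) N = insert w N"
| "apply_event (False, w) N = N - {w}"

lemma length_round_events: "length (round_events a b) = card a + card b"
  by (simp add: round_events_def)

lemma fold_apply_event_round_events:
  assumes "finite a" "finite b"
  shows "fold apply_event (round_events a b) N = N \<union> a - b"
proof -
  have "fold apply_event (map (Pair c) ws) N = (if c then N \<union> set ws else N - set ws)" for c ws N
    by (induction ws arbitrary: N) (cases c; auto)+
  then show ?thesis using assms by (simp add: round_events_def)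
qed

section \<open>The protocol\<close>

text \<open>A new neighbour is sent the log from the entries of the current round on. These include
  the insertion of the edge itself and of all edges inserted in the same round, which matches the
  non-strict comparison of insertion times in the definition of robustness.\<close>

definition send_pos :: "event list \<Rightarrow> (nat \<Rightarrow> nat) \<Rightarrow> nat set \<Rightarrow> nat \<Rightarrow> nat" where
  "send_pos L p a v = (if v \<in> a then length L else p v)"

fun sender_step :: "event list \<times> (nat \<Rightarrow> nat) \<Rightarrow> rnd \<Rightarrow> event list \<times> (nat \<Rightarrow> nat)" where
  "sender_step (L, p) (a, b, _) =
     (L @ round_events a b, \<lambda>v. min (Suc (send_pos L p a v)) (length L + length (round_events a b)))"

definition sender_state :: "hist \<Rightarrow> event list \<times> (nat \<Rightarrow> nat)" where
  "sender_state h = foldl sender_step ([], \<lambda>_. 0) h"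

text \<open>The leading bit tells the receiver whether it has now seen the whole log.\<close>

definition log_msg :: "event list \<Rightarrow> nat \<Rightarrow> msg" where
  "log_msg L s =
     (if s < length L then (Suc s = length L) # fst (L ! s) # bits_of (snd (L ! s)) else [True])"

definition log_send :: send_fn where
  "log_send n u h a b v =
     (case sender_state h of (L, p) \<Rightarrow> Some (log_msg (L @ round_events a b) (send_pos L p a v)))"

definition receive :: "msg \<Rightarrow> nat set \<Rightarrow> nat set" where
  "receive m N = (if 2 \<le> length m then apply_event (m ! 1, nat_of_bits (drop 2 m)) N else N)"

fun receiver_step ::
  "nat set \<times> (nat \<Rightarrow> nat set \<times> bool) \<Rightarrow> rnd \<Rightarrow> nat set \<times> (nat \<Rightarrow> nat set \<times> bool)" where
  "receiver_step (S, K) (a, b, ms) =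
     ((S - b) \<union> a, \<lambda>u. case ms u of
        None \<Rightarrow> K u
      | Some m \<Rightarrow> (receive m (if u \<in> a then {} else fst (K u)), hd m))"

lemma receiver_step_eq:
  "receiver_step st (a, b, ms) =
     ((fst st - b) \<union> a, \<lambda>u. case ms u of
        None \<Rightarrow> snd st u
      | Some m \<Rightarrow> (receive m (if u \<in> a then {} else fst (snd st u)), hd m))"
  by (metis prod.collapse receiver_step.simps)

definition receiver_state :: "hist \<Rightarrow> nat set \<times> (nat \<Rightarrow> nat set \<times> bool)" where
  "receiver_state h = foldl receiver_step ({}, \<lambda>_. ({}, True)) h"

definition answer_query :: query_fn where
  "answer_query n v h u w = (case receiver_state h of (S, K) \<Rightarrow>
     if v = u then Some (w \<in> S) else if v = w then Some (u \<in> S)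
     else if \<exists>x\<in>S. \<not> snd (K x) then None
     else Some (u \<in> S \<and> w \<in> fst (K u) \<or> w \<in> S \<and> u \<in> fst (K w)))"

lemma receive_log_msg:
  "receive (log_msg L s) N = (if s < length L then apply_event (L ! s) N else N)"
  by (simp add: log_msg_def receive_def)

lemma hd_log_msg: "hd (log_msg L s) = (min (Suc s) (length L) = length L)"
  by (simp add: log_msg_def)

lemma fold_receive_log_msg:
  assumes "r \<le> s"
  shows "fold apply_event (drop r (take (min (Suc s) (length L)) L)) N =
    receive (log_msg L s) (fold apply_event (drop r (take s L)) N)"
  using assms by (simp add: receive_log_msg take_Suc_conv_app_nth min_def)

primrec event_log :: "(nat \<Rightarrow> nat set set) \<Rightarrow> nat \<Rightarrow> nat \<Rightarrow> event list" where
  "event_log E 0 u = []"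
| "event_log E (Suc t) u = event_log E t u @ round_events (ins_nb E t u) (del_nb E t u)"

primrec cursor :: "(nat \<Rightarrow> nat set set) \<Rightarrow> nat \<Rightarrow> nat \<Rightarrow> nat \<Rightarrow> nat" where
  "cursor E 0 u v = 0"
| "cursor E (Suc t) u v =
     min (Suc (send_pos (event_log E t u) (cursor E t u) (ins_nb E t u) v))
         (length (event_log E (Suc t) u))"

lemma sender_state_H: "sender_state (H sf n E t u) = (event_log E t u, cursor E t u)"
  by (induction t) (simp_all add: sender_state_def)

lemma log_send_H:
  "log_send n u (H sf n E t u) (ins_nb E t u) (del_nb E t u) v =
    Some (log_msg (event_log E (Suc t) u) (send_pos (event_log E t u) (cursor E t u) (ins_nb E t u) v))"
  by (simp add: log_send_def sender_state_H)

lemma receiver_state_H_Suc: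
  "receiver_state (H log_send n E (Suc t) v) =
    receiver_step (receiver_state (H log_send n E t v))
      (ins_nb E t v, del_nb E t v, \<lambda>u. if {u,v} \<in> E (Suc t)
         then Some (log_msg (event_log E (Suc t) u)
                      (send_pos (event_log E t u) (cursor E t u) (ins_nb E t u) v))
         else None)"
  by (simp add: receiver_state_def log_send_H cong: if_cong)

lemma cursor_le_length: "cursor E t u v \<le> length (event_log E t u)"
  by (cases t) simp_all

lemma receiver_neighbours:
  "E 0 = {} \<Longrightarrow> fst (receiver_state (H log_send n E t v)) = {x. {v,x} \<in> E t}"
proof (induction t)
  case 0
  then show ?case by (simp add: receiver_state_def)
next
  case (Suc t)
  then show ?case
    unfolding receiver_state_H_Suc by (auto simp: receiver_step_eq ins_nb_def del_nb_def)
qed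

lemma valid_adv_edge_in: "valid_adv V E \<Longrightarrow> {u,w} \<in> E t \<Longrightarrow> u \<in> V \<and> w \<in> V"
  unfolding valid_adv_def by blast

lemma finite_ins_nb: "valid_adv V E \<Longrightarrow> finite V \<Longrightarrow> finite (ins_nb E t u)"
  unfolding ins_nb_def by (rule finite_subset[of _ V]) (auto dest: valid_adv_edge_in)

lemma finite_del_nb: "valid_adv V E \<Longrightarrow> finite V \<Longrightarrow> finite (del_nb E t u)"
  unfolding del_nb_def by (rule finite_subset[of _ V]) (auto dest: valid_adv_edge_in)

section \<open>Correctness of the answers\<close>

lemma ins_time_0: "ins_time E 0 e = -1"
  by (simp add: ins_time_def)

lemma ins_time_Suc:
  "ins_time E (Suc t) e = (if e \<in> E (Suc t) \<and> e \<notin> E t then int (Suc t) else ins_time E t e)"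
proof (cases "e \<in> E (Suc t) \<and> e \<notin> E t")
  case True
  then have "(GREATEST j. j < Suc t \<and> e \<in> E (Suc j) \<and> e \<notin> E j) = t"
    by (intro Greatest_equality) auto
  with True show ?thesis by (auto simp: ins_time_def)
next
  case False
  then have "(j < Suc t \<and> e \<in> E (Suc j) \<and> e \<notin> E j) \<longleftrightarrow>
      (j < t \<and> e \<in> E (Suc j) \<and> e \<notin> E j)" for j
    using less_Suc_eq by auto
  then show ?thesis unfolding ins_time_def if_not_P[OF False] by presburger
qed

lemma ins_time_le: "ins_time E t e \<le> int t"
  by (induction t) (simp_all add: ins_time_0 ins_time_Suc)

lemma fold_apply_event_event_log_suffix:
  assumes "valid_adv V E" "finite V" "j \<le> t"
  shows "fold apply_event (drop (length (event_log E j u)) (event_log E t u)) {} =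
    {w. {u,w} \<in> E t \<and> int (Suc j) \<le> ins_time E t {u,w}}"
  using \<open>j \<le> t\<close>
proof (induction t rule: dec_induct)
  case base
  have "\<not> int (Suc j) \<le> ins_time E j e" for e
    using ins_time_le[of E j e] by simp
  then show ?case by simp
next
  case (step t)
  have "length (event_log E j u) \<le> length (event_log E t u)"
    using step.hyps(1) by (induction t rule: dec_induct) auto
  then have "fold apply_event (drop (length (event_log E j u)) (event_log E (Suc t) u)) {} =
      fold apply_event (round_events (ins_nb E t u) (del_nb E t u))
        {w. {u,w} \<in> E t \<and> int (Suc j) \<le> ins_time E t {u,w}}"
    by (simp add: step.IH)
  also have "\<dots> = {w. {u,w} \<in> E t \<and> int (Suc j) \<le> ins_time E t {u,w}} \<union> ins_nb E t u - del_nb E t u"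
    using finite_ins_nb[OF assms(1,2)] finite_del_nb[OF assms(1,2)]
    by (rule fold_apply_event_round_events)
  also have "\<dots> = {w. {u,w} \<in> E (Suc t) \<and> int (Suc j) \<le> ins_time E (Suc t) {u,w}}"
    using step.hyps(1) by (auto simp: ins_time_Suc ins_nb_def del_nb_def)
  finally show ?case .
qed

text \<open>Round \<open>Suc j\<close> is the latest insertion of \<open>{v,u}\<close>: node \<open>v\<close> has replayed the log of \<open>u\<close>
  from the start of that round up to the cursor.\<close>

lemma receiver_view:
  assumes "E 0 = {}" and "{v,u} \<in> E t"
  shows "\<exists>j. ins_time E t {v,u} = int (Suc j) \<and> length (event_log E j u) \<le> cursor E t u v \<and>
    snd (receiver_state (H log_send n E t v)) u =
      (fold apply_event (drop (length (event_log E j u)) (take (cursor E t u v) (event_log E t u))) {},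
       cursor E t u v = length (event_log E t u))"
  using assms(2)
proof (induction t arbitrary: u)
  case 0
  with assms(1) show ?case by simp
next
  case (Suc t)
  let ?L = "event_log E t u" and ?L' = "event_log E (Suc t) u"
  let ?s = "send_pos ?L (cursor E t u) (ins_nb E t u) v"
  let ?K = "snd (receiver_state (H log_send n E t v)) u"
  have K': "snd (receiver_state (H log_send n E (Suc t) v)) u =
      (receive (log_msg ?L' ?s) (if u \<in> ins_nb E t v then {} else fst ?K), hd (log_msg ?L' ?s))"
    using Suc.prems unfolding receiver_state_H_Suc by (simp add: receiver_step_eq insert_commute)
  have s_le: "?s \<le> length ?L"
    using cursor_le_length by (simp add: send_pos_def)
  then have take_s: "take ?s ?L' = take ?s ?L" by simp
  obtain j where j: "ins_time E (Suc t) {v,u} = int (Suc j)" "length (event_log E j u) \<le> ?s"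
    and old: "(if u \<in> ins_nb E t v then {} else fst ?K) =
      fold apply_event (drop (length (event_log E j u)) (take ?s ?L)) {}"
  proof (cases "{v,u} \<in> E t")
    case True
    with Suc.IH obtain j where "ins_time E t {v,u} = int (Suc j)"
      "length (event_log E j u) \<le> cursor E t u v"
      "?K = (fold apply_event (drop (length (event_log E j u)) (take (cursor E t u v) ?L)) {},
             cursor E t u v = length ?L)"
      by blast
    with True show ?thesis
      by (intro that[of j]) (simp_all add: ins_time_Suc send_pos_def ins_nb_def insert_commute)
  next
    case False
    with Suc.prems show ?thesis
      by (intro that[of t]) (simp_all add: ins_time_Suc send_pos_def ins_nb_def insert_commute)
  qed
  have "snd (receiver_state (H log_send n E (Suc t) v)) u =
      (fold apply_event (drop (length (event_log E j u)) (take (cursor E (Suc t) u v) ?L')) {},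
       cursor E (Suc t) u v = length ?L')"
    unfolding K' old using j(2) by (simp add: fold_receive_log_msg hd_log_msg take_s del: event_log.simps)
  with j s_le show ?case by auto
qed

lemma receiver_view_up_to_date:
  assumes "valid_adv V E" "finite V" "{v,x} \<in> E t"
    and "snd (snd (receiver_state (H log_send n E t v)) x)"
  shows "fst (snd (receiver_state (H log_send n E t v)) x) =
    {w. {x,w} \<in> E t \<and> ins_time E t {v,x} \<le> ins_time E t {x,w}}"
proof -
  have "E 0 = {}" using assms(1) by (simp add: valid_adv_def)
  with assms(3) obtain j where j: "ins_time E t {v,x} = int (Suc j)"
    and view: "snd (receiver_state (H log_send n E t v)) x =
      (fold apply_event (drop (length (event_log E j x)) (take (cursor E t x v) (event_log E t x))) {},
       cursor E t x v = length (event_log E t x))"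
    using receiver_view by blast
  have "j \<le> t" using ins_time_le[of E t "{v,x}"] j by simp
  with view assms(4) show ?thesis
    by (simp add: j fold_apply_event_event_log_suffix[OF assms(1,2)])
qed

lemma answers_correct_log_send:
  assumes "valid_adv V E" "finite V"
  shows "answers_correct log_send answer_query n V E"
  unfolding answers_correct_def
proof (intro allI impI)
  fix i v u w
  obtain S K where SK: "receiver_state (H log_send n E i v) = (S, K)" by fastforce
  have S: "S = {x. {v,x} \<in> E i}"
    using receiver_neighbours[of E n i v] assms(1) SK by (simp add: valid_adv_def)
  have K: "fst (K x) = {w. {x,w} \<in> E i \<and> ins_time E i {v,x} \<le> ins_time E i {x,w}}"
    if "x \<in> S" "snd (K x)" for x
    using receiver_view_up_to_date[OF assms, of v x i n] that S SK by simp
  show "answer_query n v (H log_send n E i v) u w \<in> {None, Some (robust E i v u w)}"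
    using S K by (auto simp: answer_query_def SK robust_def insert_commute)
qed

section \<open>Amortized round complexity\<close>

primrec backlog :: "(nat \<Rightarrow> nat set set) \<Rightarrow> nat \<Rightarrow> nat \<Rightarrow> nat" where
  "backlog E u 0 = 0"
| "backlog E u (Suc t) = backlog E u t + length (round_events (ins_nb E t u) (del_nb E t u)) - 1"

lemma lag_le_backlog: "length (event_log E t u) - cursor E t u v \<le> backlog E u t"
proof (induction t)
  case 0
  then show ?case by simp
next
  case (Suc t)
  then show ?case
    using cursor_le_length[of E t u v] by (auto simp: send_pos_def min_def)
qed

lemma card_backlog_pos_le:
  "card {j. j < t \<and> 0 < backlog E u (Suc j)} + backlog E u t \<le> length (event_log E t u)"
proof (induction t)
  case 0
  then show ?case by simp
next
  case (Suc t)
  have "{j. j < Suc t \<and> 0 < backlog E u (Suc j)} =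
      {j. j < t \<and> 0 < backlog E u (Suc j)} \<union> {j. j = t \<and> 0 < backlog E u (Suc t)}"
    by (auto simp del: backlog.simps simp: less_Suc_eq)
  then have "card {j. j < Suc t \<and> 0 < backlog E u (Suc j)} \<le>
      card {j. j < t \<and> 0 < backlog E u (Suc j)} + (if 0 < backlog E u (Suc t) then 1 else 0)"
    by (simp add: card_Un_le)
  moreover have "backlog E u (Suc t) =
      backlog E u t + length (round_events (ins_nb E t u) (del_nb E t u)) - 1"
    by simp
  moreover have "length (event_log E (Suc t) u) =
      length (event_log E t u) + length (round_events (ins_nb E t u) (del_nb E t u))"
    by simp
  ultimately show ?case
    using Suc.IH by (cases "0 < backlog E u (Suc t)") (simp_all del: backlog.simps event_log.simps)
qed

lemma bad_round_backlog:
  assumes "valid_adv V E" and "bad_round log_send answer_query n V E j"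
  shows "\<exists>x\<in>V. 0 < backlog E x (Suc j)"
proof -
  obtain v u w where "v \<in> V" "answer_query n v (H log_send n E (Suc j) v) u w = None"
    using assms(2) unfolding bad_round_def by blast
  then obtain x where x: "x \<in> fst (receiver_state (H log_send n E (Suc j) v))"
    and not_done: "\<not> snd (snd (receiver_state (H log_send n E (Suc j) v)) x)"
    by (auto simp: answer_query_def split: prod.splits if_splits)
  have "E 0 = {}" using assms(1) by (simp add: valid_adv_def)
  then have edge: "{v,x} \<in> E (Suc j)"
    using x unfolding receiver_neighbours[of E, OF \<open>E 0 = {}\<close>] by simp
  with \<open>E 0 = {}\<close> not_done have "cursor E (Suc j) x v \<noteq> length (event_log E (Suc j) x)"
    using receiver_view[of E v x "Suc j" n] by auto
  then have "0 < backlog E x (Suc j)"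
    using lag_le_backlog[of E "Suc j" x v] cursor_le_length[of E "Suc j" x v] by linarith
  moreover have "x \<in> V" using valid_adv_edge_in[OF assms(1) edge] by simp
  ultimately show ?thesis by blast
qed

lemma sum_card_incident_le:
  fixes A :: "'a :: linorder set set"
  assumes "finite V" and "\<forall>e\<in>A. e \<subseteq> V \<and> card e = 2"
  shows "(\<Sum>x\<in>V. card {w. {x,w} \<in> A}) \<le> 2 * card A"
proof -
  have "finite A"
    using assms by (metis Pow_iff finite_Pow_iff finite_subset subsetI)
  have "finite {w. {x,w} \<in> A}" if "x \<in> V" for x
    using assms by (intro finite_subset[OF _ assms(1)]) auto
  then have "(\<Sum>x\<in>V. card {w. {x,w} \<in> A}) = card (SIGMA x:V. {w. {x,w} \<in> A})"
    by (simp add: card_SigmaI[OF assms(1)])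
  also have "\<dots> \<le> card (A \<times> (UNIV :: bool set))"
  proof (rule card_inj_on_le)
    \<comment> \<open>the flag \<open>x < w\<close> separates the two ordered pairs giving the same edge\<close>
    show "inj_on (\<lambda>(x,w). ({x,w}, x < w)) (SIGMA x:V. {w. {x,w} \<in> A})"
      using assms(2) by (fastforce simp: inj_on_def doubleton_eq_iff)
    show "finite (A \<times> (UNIV :: bool set))" using \<open>finite A\<close> by simp
  qed auto
  also have "\<dots> = 2 * card A" by (simp add: card_cartesian_product)
  finally show ?thesis .
qed

lemma sum_length_round_events_le:
  assumes "valid_adv V E" and "finite V"
  shows "(\<Sum>x\<in>V. length (round_events (ins_nb E j x) (del_nb E j x))) \<le> 2 * changes E j"
proof -
  have edges: "\<forall>e\<in>E (Suc j) - E j. e \<subseteq> V \<and> card e = 2"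
      "\<forall>e\<in>E j - E (Suc j). e \<subseteq> V \<and> card e = 2"
    using assms(1) unfolding valid_adv_def by blast+
  have "ins_nb E j x = {w. {x,w} \<in> E (Suc j) - E j}" "del_nb E j x = {w. {x,w} \<in> E j - E (Suc j)}" for x
    by (auto simp: ins_nb_def del_nb_def)
  then show ?thesis
    using sum_card_incident_le[OF assms(2) edges(1)] sum_card_incident_le[OF assms(2) edges(2)]
    by (simp add: length_round_events sum.distrib changes_def)
qed

lemma sum_length_event_log_le:
  assumes "valid_adv V E" and "finite V"
  shows "(\<Sum>x\<in>V. length (event_log E t x)) \<le> 2 * (\<Sum>j<t. changes E j)"
proof (induction t)
  case 0
  then show ?case by simp
next
  case (Suc t)
  then show ?case
    using sum_length_round_events_le[OF assms, of t] by (simp add: sum.distrib)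
qed

lemma amortized_bound_log_send:
  assumes "valid_adv V E" and "finite V"
  shows "amortized_bound log_send answer_query 2 n V E"
  unfolding amortized_bound_def
proof
  fix i
  have "{j. j < i \<and> bad_round log_send answer_query n V E j} \<subseteq>
      (\<Union>x\<in>V. {j. j < i \<and> 0 < backlog E x (Suc j)})"
    using bad_round_backlog[OF assms(1)] by blast
  then have "card {j. j < i \<and> bad_round log_send answer_query n V E j} \<le>
      card (\<Union>x\<in>V. {j. j < i \<and> 0 < backlog E x (Suc j)})"
    by (rule card_mono[rotated]) (simp add: assms(2))
  also have "\<dots> \<le> (\<Sum>x\<in>V. card {j. j < i \<and> 0 < backlog E x (Suc j)})"
    by (rule card_UN_le[OF assms(2)])
  also have "\<dots> \<le> (\<Sum>x\<in>V. length (event_log E i x))"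
    by (intro sum_mono le_trans[OF le_add1 card_backlog_pos_le])
  also have "\<dots> \<le> 2 * (\<Sum>j<i. changes E j)"
    by (rule sum_length_event_log_le[OF assms])
  finally show "real (card {j. j < i \<and> bad_round log_send answer_query n V E j}) \<le>
      2 * real (\<Sum>j<i. changes E j)"
    by (metis of_nat_le_iff of_nat_mult of_nat_numeral)
qed

section \<open>Message size\<close>

lemma le_two_power_ceiling_log: "1 \<le> n \<Longrightarrow> n \<le> 2 ^ nat \<lceil>log 2 (real n)\<rceil>"
proof -
  assume "1 \<le> n"
  then have "real n = 2 powr log 2 (real n)" and "0 \<le> log 2 (real n)" by simp_all
  then have "real n \<le> 2 powr real (nat \<lceil>log 2 (real n)\<rceil>)"
    by (metis le_of_int_ceiling of_nat_nat ceiling_mono ceiling_zero powr_mono one_le_numeral)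
  then show ?thesis by (simp add: powr_realpow flip: of_nat_le_iff)
qed

lemma event_log_nodes:
  assumes "valid_adv V E" and "finite V"
  shows "snd ` set (event_log E t u) \<subseteq> V"
proof (induction t)
  case 0
  then show ?case by simp
next
  case (Suc t)
  have "ins_nb E t u \<subseteq> V" "del_nb E t u \<subseteq> V"
    by (auto simp: ins_nb_def del_nb_def dest: valid_adv_edge_in[OF assms(1)])
  with Suc show ?case
    by (auto simp: round_events_def finite_ins_nb[OF assms] finite_del_nb[OF assms])
qed

lemma length_log_msg_le:
  assumes "snd ` set L \<subseteq> {..< 2 ^ l}"
  shows "length (log_msg L s) \<le> l + 2"
proof (cases "s < length L")
  case True
  then have "snd (L ! s) < 2 ^ l" using assms nth_mem by blast
  with True show ?thesis by (simp add: log_msg_def length_bits_of_le)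
qed (simp add: log_msg_def)

lemma msg_bounded_log_send:
  assumes "finite V" "card V = n" "V \<subseteq> {..< n ^ d}" "valid_adv V E"
  shows "msg_bounded log_send (d + 2) n V E"
  unfolding msg_bounded_def
proof (intro allI impI)
  fix i v u m
  assume "v \<in> V \<and> {v,u} \<in> E (Suc i) \<and>
    log_send n v (H log_send n E i v) (ins_nb E i v) (del_nb E i v) u = Some m"
  then have "v \<in> V" and m: "m = log_msg (event_log E (Suc i) v)
      (send_pos (event_log E i v) (cursor E i v) (ins_nb E i v) u)"
    by (simp_all only: log_send_H option.inject)
  define c where "c = nat \<lceil>log 2 (real n)\<rceil>"
  have "0 < n" using \<open>v \<in> V\<close> assms(1,2) card_gt_0_iff by blast
  then have "n ^ d \<le> 2 ^ (c * d)"
    unfolding c_def power_mult by (intro power_mono le_two_power_ceiling_log) simp_all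
  then have "V \<subseteq> {..< 2 ^ (c * d)}"
    using assms(3) by (meson lessThan_subset_iff subset_trans)
  with event_log_nodes[OF assms(4,1)] have "snd ` set (event_log E (Suc i) v) \<subseteq> {..< 2 ^ (c * d)}"
    by (rule subset_trans)
  then have "length m \<le> c * d + 2" unfolding m by (rule length_log_msg_le)
  also have "\<dots> \<le> (d + 2) * (c + 1)" by (simp add: algebra_simps)
  finally have "real (length m) \<le> real ((d + 2) * (c + 1))"
    by (simp only: of_nat_le_iff)
  moreover have "real c = real_of_int \<lceil>log 2 (real n)\<rceil>"
    using \<open>0 < n\<close> by (simp add: c_def)
  ultimately show "real (length m) \<le> real (d + 2) * (real_of_int \<lceil>log 2 (real n)\<rceil> + 1)"
    by (simp only: of_nat_mult of_nat_add of_nat_1)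
qed

theorem theorem9:
  shows "\<forall>d::nat. \<exists>(sf::send_fn) (qry::query_fn) (K::nat) (c::real).
           \<forall>(n::nat) (V::nat set) (E::nat \<Rightarrow> nat set set).
             finite V \<and> card V = n \<and> V \<subseteq> {..< n ^ d} \<and> valid_adv V E \<longrightarrow>
               msg_bounded sf K n V E \<and> answers_correct sf qry n V E \<and>
               amortized_bound sf qry c n V E"
proof -
  have "finite V \<and> card V = n \<and> V \<subseteq> {..< n ^ d} \<and> valid_adv V E \<longrightarrow>
      msg_bounded log_send (d + 2) n V E \<and> answers_correct log_send answer_query n V E \<and>
      amortized_bound log_send answer_query 2 n V E" for d n V E
    using msg_bounded_log_send answers_correct_log_send amortized_bound_log_send by simp
  then show ?thesis by (intro allI exI) assumption
qed

end
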